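(* Let $q$ be a prime power, let $n\ge 2$ and $K\ge 1$ be fixed integers, and fix a receiver index $j\in\{1,\dots,n\}$. Let $\mathbf H[t_0],\mathbf H[t_1],\dots,\mathbf H[t_K]$ be independent random $n\times n$ matrices, each with entries drawn independently and uniformly from $\mathbb F_q\setminus\{0\}$. For each $s$ let $\mathbf h_j^{\mathrm{int}}[t_s]=(h_{j1}[t_s],\dots,h_{j\,j-1}[t_s],h_{j\,j+1}[t_s],\dots,h_{jn}[t_s])\in\mathbb F_q^{\,n-1}$ be the interference vector of receiver $j$ at time $t_s$. Then, conditional on the event that the vectors $\mathbf h_j^{\mathrm{int}}[t_0],\dots,\mathbf h_j^{\mathrm{int}}[t_K]$ are linearly dependent over $\mathbb F_q$, the probability that receiver $j$ can recover its message from $\mathbf H[t_0],\dots,\mathbf H[t_K]$ is $1-O(q^{-1})$ as $q\to\infty$.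
   Context: Receiver $j$ "can recover its message from" matrices $\mathbf M_0,\dots,\mathbf M_K\in\mathbb F_q^{n\times n}$ means: there exist scalars $\lambda_0,\dots,\lambda_K\in\mathbb F_q$ such that $\sum_{s=0}^K\lambda_s(\mathbf M_s)_{jj}\neq 0$ and $\sum_{s=0}^K\lambda_s(\mathbf M_s)_{ji}=0$ for every $i\neq j$ (equivalently $\sum_s \lambda_s\mathbf h_j^{\mathrm{int}}[t_s]=\mathbf 0$ while the corresponding combination of diagonal entries is nonzero). *)

theory Defs
  imports Complex_Main "HOL-Algebra.Ring" "HOL-Library.FuncSet"
begin

text \<open>Channel realisations: H (s, r, c) is entry (r, c) of the matrix H[t_s],
  for s in {0..K} and 0-based row/column indices r, c < n.
  Every entry ranges over the nonzero field elements; the uniform independent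
  distribution is the uniform distribution on this finite set.\<close>
definition channel_set :: "('a, 'm) ring_scheme \<Rightarrow> nat \<Rightarrow> nat \<Rightarrow> (nat \<times> nat \<times> nat \<Rightarrow> 'a) set" where
  "channel_set R n K = ({0..K} \<times> {..<n} \<times> {..<n}) \<rightarrow>\<^sub>E (carrier R - {\<zero>\<^bsub>R\<^esub>})"

definition int_dependent :: "('a, 'm) ring_scheme \<Rightarrow> nat \<Rightarrow> nat \<Rightarrow> nat \<Rightarrow> (nat \<times> nat \<times> nat \<Rightarrow> 'a) \<Rightarrow> bool" where
  "int_dependent R n K j H \<longleftrightarrow>
     (\<exists>c. (\<forall>s\<in>{0..K}. c s \<in> carrier R) \<and> (\<exists>s\<in>{0..K}. c s \<noteq> \<zero>\<^bsub>R\<^esub>) \<and>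
        (\<forall>i<n. i \<noteq> j \<longrightarrow> finsum R (\<lambda>s. c s \<otimes>\<^bsub>R\<^esub> H (s, j, i)) {0..K} = \<zero>\<^bsub>R\<^esub>))"

definition can_recover :: "('a, 'm) ring_scheme \<Rightarrow> nat \<Rightarrow> nat \<Rightarrow> nat \<Rightarrow> (nat \<times> nat \<times> nat \<Rightarrow> 'a) \<Rightarrow> bool" where
  "can_recover R n K j H \<longleftrightarrow>
     (\<exists>c. (\<forall>s\<in>{0..K}. c s \<in> carrier R) \<and>
        finsum R (\<lambda>s. c s \<otimes>\<^bsub>R\<^esub> H (s, j, j)) {0..K} \<noteq> \<zero>\<^bsub>R\<^esub> \<and>
        (\<forall>i<n. i \<noteq> j \<longrightarrow> finsum R (\<lambda>s. c s \<otimes>\<^bsub>R\<^esub> H (s, j, i)) {0..K} = \<zero>\<^bsub>R\<^esub>))"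

definition cond_prob_recover :: "('a, 'm) ring_scheme \<Rightarrow> nat \<Rightarrow> nat \<Rightarrow> nat \<Rightarrow> real" where
  "cond_prob_recover R n K j =
     real (card {H \<in> channel_set R n K. int_dependent R n K j H \<and> can_recover R n K j H})
     / real (card {H \<in> channel_set R n K. int_dependent R n K j H})"

end

theory Submission
  imports Defs
begin

text \<open>Conditional on dependence, fix one dependency \<open>c\<close> of the interference vectors; it
  depends only on the off-diagonal entries of row \<open>j\<close>. If receiver \<open>j\<close> fails, \<open>c\<close> also
  annihilates the diagonal entries \<open>H[t_s]\<^sub>j\<^sub>j\<close>. Overwriting the diagonal entry at a pivot
  \<open>k\<close> with \<open>c\<^sub>k \<noteq> 0\<close> by any of the \<open>q - 1\<close> nonzero values keeps the channel dependent, and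
  the original channel can be read back off the result, because the failure equation
  \<open>\<Sum>\<^sub>s c\<^sub>s H[t_s]\<^sub>j\<^sub>j = 0\<close> determines the overwritten entry. Hence the failures, counted
  \<open>q - 1\<close> times, inject into the dependent channels, and the conditional failure
  probability is at most \<open>1/(q - 1) \<le> 2/q\<close>.\<close>

lemma (in domain) finsum_mult_cancel_entry:
  assumes "finite A" and "k \<in> A"
    and c: "c \<in> A \<rightarrow> carrier R" and "c k \<noteq> \<zero>"
    and f: "f \<in> A \<rightarrow> carrier R" and g: "g \<in> A \<rightarrow> carrier R"
    and agree: "\<And>s. s \<in> A \<Longrightarrow> s \<noteq> k \<Longrightarrow> f s = g s"
    and sums: "(\<Oplus>s\<in>A. c s \<otimes> f s) = (\<Oplus>s\<in>A. c s \<otimes> g s)"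
  shows "f k = g k"
proof -
  have A: "A = insert k (A - {k})" using \<open>k \<in> A\<close> by auto
  have k: "c k \<in> carrier R" "f k \<in> carrier R" "g k \<in> carrier R" using c f g \<open>k \<in> A\<close> by auto
  define X where "X = (\<Oplus>s\<in>A - {k}. c s \<otimes> f s)"
  have X_g: "X = (\<Oplus>s\<in>A - {k}. c s \<otimes> g s)"
    unfolding X_def by (rule finsum_cong) (use c f g agree in auto)
  have X: "X \<in> carrier R" unfolding X_def using c f by (intro finsum_closed) auto
  have "(\<Oplus>s\<in>A. c s \<otimes> f s) = c k \<otimes> f k \<oplus> X"
    unfolding X_def using \<open>finite A\<close> c f k by (subst A, subst finsum_insert) auto
  moreover have "(\<Oplus>s\<in>A. c s \<otimes> g s) = c k \<otimes> g k \<oplus> X"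
    unfolding X_g using \<open>finite A\<close> c g k by (subst A, subst finsum_insert) auto
  ultimately have "c k \<otimes> f k = c k \<otimes> g k"
    using sums X k add.right_cancel[of X "c k \<otimes> f k" "c k \<otimes> g k"] by simp
  then show ?thesis using m_lcancel[OF \<open>c k \<noteq> \<zero>\<close> k] by simp
qed

definition interference_dependency ::
    "('a, 'm) ring_scheme \<Rightarrow> nat \<Rightarrow> nat \<Rightarrow> nat \<Rightarrow> (nat \<times> nat \<times> nat \<Rightarrow> 'a) \<Rightarrow> (nat \<Rightarrow> 'a) \<Rightarrow> bool"
  where "interference_dependency R n K j H c \<longleftrightarrow>
    (\<forall>s\<in>{0..K}. c s \<in> carrier R) \<and> (\<exists>s\<in>{0..K}. c s \<noteq> \<zero>\<^bsub>R\<^esub>) \<and>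
    (\<forall>i<n. i \<noteq> j \<longrightarrow> finsum R (\<lambda>s. c s \<otimes>\<^bsub>R\<^esub> H (s, j, i)) {0..K} = \<zero>\<^bsub>R\<^esub>)"

definition some_dependency ::
    "('a, 'm) ring_scheme \<Rightarrow> nat \<Rightarrow> nat \<Rightarrow> nat \<Rightarrow> (nat \<times> nat \<times> nat \<Rightarrow> 'a) \<Rightarrow> nat \<Rightarrow> 'a"
  where "some_dependency R n K j H = (SOME c. interference_dependency R n K j H c)"

definition dependency_pivot ::
    "('a, 'm) ring_scheme \<Rightarrow> nat \<Rightarrow> nat \<Rightarrow> nat \<Rightarrow> (nat \<times> nat \<times> nat \<Rightarrow> 'a) \<Rightarrow> nat"
  where "dependency_pivot R n K j H =
    (SOME s. s \<in> {0..K} \<and> some_dependency R n K j H s \<noteq> \<zero>\<^bsub>R\<^esub>)"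

definition retune_pivot ::
    "('a, 'm) ring_scheme \<Rightarrow> nat \<Rightarrow> nat \<Rightarrow> nat \<Rightarrow> (nat \<times> nat \<times> nat \<Rightarrow> 'a) \<Rightarrow> 'a \<Rightarrow> nat \<times> nat \<times> nat \<Rightarrow> 'a"
  where "retune_pivot R n K j H v = H((dependency_pivot R n K j H, j, j) := v)"

lemma int_dependent_iff_dependency:
  "int_dependent R n K j H \<longleftrightarrow> (\<exists>c. interference_dependency R n K j H c)"
  unfolding int_dependent_def interference_dependency_def by blast

lemma
  assumes "\<And>s i. i \<noteq> j \<Longrightarrow> H' (s, j, i) = H (s, j, i)"
  shows some_dependency_cong: "some_dependency R n K j H' = some_dependency R n K j H"
    and dependency_pivot_cong: "dependency_pivot R n K j H' = dependency_pivot R n K j H"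
    and int_dependent_cong: "int_dependent R n K j H' = int_dependent R n K j H"
proof -
  have "interference_dependency R n K j H' = interference_dependency R n K j H"
    using assms unfolding interference_dependency_def by (intro ext) simp
  then show "some_dependency R n K j H' = some_dependency R n K j H"
    and "dependency_pivot R n K j H' = dependency_pivot R n K j H"
    and "int_dependent R n K j H' = int_dependent R n K j H"
    unfolding some_dependency_def dependency_pivot_def int_dependent_iff_dependency by simp_all
qed

lemma
  assumes "int_dependent R n K j H"
  shows some_dependency: "interference_dependency R n K j H (some_dependency R n K j H)"
    and dependency_pivot: "dependency_pivot R n K j H \<in> {0..K}"
      "some_dependency R n K j H (dependency_pivot R n K j H) \<noteq> \<zero>\<^bsub>R\<^esub>"
proof -
  show "interference_dependency R n K j H (some_dependency R n K j H)"
    using assms unfolding int_dependent_iff_dependency some_dependency_def by (rule someI_ex)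
  then have "\<exists>s. s \<in> {0..K} \<and> some_dependency R n K j H s \<noteq> \<zero>\<^bsub>R\<^esub>"
    unfolding interference_dependency_def by blast
  then have "dependency_pivot R n K j H \<in> {0..K} \<and>
      some_dependency R n K j H (dependency_pivot R n K j H) \<noteq> \<zero>\<^bsub>R\<^esub>"
    unfolding dependency_pivot_def by (rule someI_ex)
  then show "dependency_pivot R n K j H \<in> {0..K}"
    and "some_dependency R n K j H (dependency_pivot R n K j H) \<noteq> \<zero>\<^bsub>R\<^esub>" by auto
qed

lemma some_dependency_annihilates_diagonal:
  assumes "int_dependent R n K j H" and "\<not> can_recover R n K j H"
  shows "finsum R (\<lambda>s. some_dependency R n K j H s \<otimes>\<^bsub>R\<^esub> H (s, j, j)) {0..K} = \<zero>\<^bsub>R\<^esub>"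
  using some_dependency[OF assms(1)] assms(2)
  unfolding interference_dependency_def can_recover_def by blast

lemma retune_pivot_off_diagonal:
  "i \<noteq> j \<Longrightarrow> retune_pivot R n K j H v (s, j, i) = H (s, j, i)"
  unfolding retune_pivot_def by simp

lemma int_dependent_retune_pivot:
  "int_dependent R n K j (retune_pivot R n K j H v) = int_dependent R n K j H"
  by (rule int_dependent_cong) (rule retune_pivot_off_diagonal)

lemma finite_channel_set: "finite (carrier R) \<Longrightarrow> finite (channel_set R n K)"
  unfolding channel_set_def by (intro finite_PiE) auto

lemma retune_pivot_in_channel_set:
  assumes "H \<in> channel_set R n K" and "int_dependent R n K j H" and "j < n"
    and "v \<in> carrier R - {\<zero>\<^bsub>R\<^esub>}"
  shows "retune_pivot R n K j H v \<in> channel_set R n K"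
proof -
  have "(dependency_pivot R n K j H, j, j) \<in> {0..K} \<times> {..<n} \<times> {..<n}"
    using dependency_pivot(1)[OF assms(2)] \<open>j < n\<close> by auto
  then show ?thesis
    using assms(1,4) unfolding retune_pivot_def channel_set_def by (metis PiE_fun_upd insert_absorb)
qed

lemma (in domain) retune_pivot_inject:
  assumes "j < n"
    and H: "H \<in> channel_set R n K" "int_dependent R n K j H" "\<not> can_recover R n K j H"
    and H': "H' \<in> channel_set R n K" "int_dependent R n K j H'" "\<not> can_recover R n K j H'"
    and eq: "retune_pivot R n K j H v = retune_pivot R n K j H' v'"
  shows "H = H' \<and> v = v'"
proof -
  have agree: "H' (s, j, i) = H (s, j, i)" if "i \<noteq> j" for s i
    using fun_cong[OF eq, of "(s, j, i)"] that by (simp add: retune_pivot_off_diagonal)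
  note same = some_dependency_cong[of j H' H R n K, OF agree]
    dependency_pivot_cong[of j H' H R n K, OF agree]
  define c where "c = some_dependency R n K j H"
  define k where "k = dependency_pivot R n K j H"
  have v: "v = v'" using fun_cong[OF eq, of "(k, j, j)"] same unfolding retune_pivot_def k_def by simp
  have off_pivot: "H x = H' x" if "x \<noteq> (k, j, j)" for x
    using fun_cong[OF eq, of x] same that unfolding retune_pivot_def k_def by simp
  have "H (k, j, j) = H' (k, j, j)"
  proof (rule finsum_mult_cancel_entry[where A = "{0..K}" and k = k and c = c
      and f = "\<lambda>s. H (s, j, j)" and g = "\<lambda>s. H' (s, j, j)"])
    show "k \<in> {0..K}" "c k \<noteq> \<zero>" using dependency_pivot[OF H(2)] unfolding c_def k_def by auto
    show "c \<in> {0..K} \<rightarrow> carrier R"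
      using some_dependency[OF H(2)] unfolding c_def interference_dependency_def by blast
    show "(\<lambda>s. H (s, j, j)) \<in> {0..K} \<rightarrow> carrier R" "(\<lambda>s. H' (s, j, j)) \<in> {0..K} \<rightarrow> carrier R"
      using H(1) H'(1) \<open>j < n\<close> unfolding channel_set_def by auto
    show "(\<Oplus>s\<in>{0..K}. c s \<otimes> H (s, j, j)) = (\<Oplus>s\<in>{0..K}. c s \<otimes> H' (s, j, j))"
      using some_dependency_annihilates_diagonal[OF H(2,3)]
        some_dependency_annihilates_diagonal[OF H'(2,3)] same unfolding c_def by simp
  qed (use off_pivot in auto)
  then show ?thesis using off_pivot v by (metis ext)
qed

lemma (in domain) card_failures_mult_le_card_dependent:
  assumes "finite (carrier R)" and "j < n"
  shows "card {H \<in> channel_set R n K. int_dependent R n K j H \<and> \<not> can_recover R n K j H}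
      * (card (carrier R) - 1)
    \<le> card {H \<in> channel_set R n K. int_dependent R n K j H}"
proof -
  let ?B = "{H \<in> channel_set R n K. int_dependent R n K j H \<and> \<not> can_recover R n K j H}"
  let ?D = "{H \<in> channel_set R n K. int_dependent R n K j H}"
  have "finite (channel_set R n K)" using finite_channel_set assms(1) .
  moreover have "(\<lambda>(H, v). retune_pivot R n K j H v) ` (?B \<times> (carrier R - {\<zero>})) \<subseteq> ?D"
    using \<open>j < n\<close> by (auto simp: int_dependent_retune_pivot intro!: retune_pivot_in_channel_set)
  ultimately have "card (?B \<times> (carrier R - {\<zero>})) \<le> card ?D"
    using retune_pivot_inject[OF \<open>j < n\<close>] by (intro card_inj_on_le inj_onI) auto
  then show ?thesis using assms(1) by (simp add: card_cartesian_product card_Diff_singleton)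
qed

lemma (in domain) dependent_channels_nonempty:
  assumes "K \<ge> 1" and "j < n"
  shows "{H \<in> channel_set R n K. int_dependent R n K j H} \<noteq> {}"
proof -
  define H :: "nat \<times> nat \<times> nat \<Rightarrow> 'a" where "H = (\<lambda>x\<in>{0..K} \<times> {..<n} \<times> {..<n}. \<one>)"
  define c :: "nat \<Rightarrow> 'a" where "c s = (if s = 0 then \<one> else if s = 1 then \<ominus> \<one> else \<zero>)" for s
  have c: "c s \<in> carrier R" for s unfolding c_def by auto
  have "finsum R c {0..K} = finsum R c {0, 1}"
    using \<open>K \<ge> 1\<close> c by (intro add.finprod_mono_neutral_cong_right) (auto simp: c_def)
  also have "\<dots> = \<zero>" by (simp add: c_def r_neg)
  finally have "(\<Oplus>s\<in>{0..K}. c s \<otimes> H (s, j, i)) = \<zero>" if "i < n" for i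
    using that \<open>j < n\<close> c by (subst finsum_cong[where g = c]) (auto simp: H_def)
  then have "interference_dependency R n K j H c"
    unfolding interference_dependency_def using c by (auto intro!: bexI[of _ 0] simp: c_def)
  moreover have "H \<in> channel_set R n K" unfolding H_def channel_set_def by auto
  ultimately show ?thesis unfolding int_dependent_iff_dependency by blast
qed

lemma ratio_ge_of_card_mult_le:
  fixes b g d q :: nat
  assumes "d = g + b" and "d > 0" and "q \<ge> 2" and "b * (q - 1) \<le> d"
  shows "real g / real d \<ge> 1 - 2 / real q"
proof -
  have "real (q - 1) = real q - 1" using \<open>q \<ge> 2\<close> by simp
  then have bound: "real b * (real q - 1) \<le> real d"
    using of_nat_mono[OF assms(4)] by (metis of_nat_mult)
  have "real b * real q \<le> real b * (2 * (real q - 1))"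
    using \<open>q \<ge> 2\<close> by (intro mult_left_mono) auto
  also have "\<dots> = 2 * (real b * (real q - 1))" by simp
  also have "\<dots> \<le> 2 * real d" using bound by simp
  finally have "real b / real d \<le> 2 / real q" using assms(2,3) by (simp add: field_simps)
  moreover have "real g / real d = 1 - real b / real d"
  proof -
    have "real g = real d - real b" using assms(1) by simp
    then show ?thesis using assms(2) by (simp add: diff_divide_distrib)
  qed
  ultimately show ?thesis by simp
qed

lemma (in domain) cond_prob_recover_ge:
  assumes "finite (carrier R)" and "j < n" and "K \<ge> 1"
  shows "cond_prob_recover R n K j \<ge> 1 - 2 / real (card (carrier R))"
proof -
  let ?D = "{H \<in> channel_set R n K. int_dependent R n K j H}"
  let ?G = "{H \<in> channel_set R n K. int_dependent R n K j H \<and> can_recover R n K j H}"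
  let ?B = "{H \<in> channel_set R n K. int_dependent R n K j H \<and> \<not> can_recover R n K j H}"
  have fin_D: "finite ?D" using finite_channel_set[OF assms(1)] by simp
  have "card ?D = card (?G \<union> ?B)" by (rule arg_cong[where f = card]) auto
  also have "\<dots> = card ?G + card ?B"
    using fin_D by (intro card_Un_disjoint) (auto intro: finite_subset[OF _ fin_D])
  finally have "card ?D = card ?G + card ?B" .
  moreover have "card ?D > 0"
    using dependent_channels_nonempty[OF assms(3,2)] fin_D by (simp add: card_gt_0_iff)
  moreover have "card (carrier R) \<ge> 2"
    using card_mono[OF assms(1), of "{\<zero>, \<one>}"] by simp
  ultimately show ?thesis
    unfolding cond_prob_recover_def
    using card_failures_mult_le_card_dependent[OF assms(1,2)] by (rule ratio_ge_of_card_mult_le)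
qed

theorem lemma3:
  fixes n K j :: nat
  assumes "n \<ge> 2" and "K \<ge> 1" and "j < n"
  shows "\<exists>C::real. \<forall>R :: nat ring. field R \<and> finite (carrier R) \<longrightarrow>
           cond_prob_recover R n K j \<ge> 1 - C / real (card (carrier R))"
  using domain.cond_prob_recover_ge[OF field.axioms(1) _ assms(3,2)] by blast

end
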